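(* Let $k\ge2$, let $\Pi\subsetneq\Sigma_k$ be a proper subshift, and let $T:\Pi\to\Sigma_k$ be the map constructed below. If $y,\tilde y\in\Pi$ form a DC1 pair, then $T(y),T(\tilde y)$ form a DC1 pair.
   Context: $\Sigma_k=\{0,\dots,k-1\}^{\mathbb{N}}$ with metric $d(x,y)=\sum_{n\ge1}\delta(x_n,y_n)/2^n$ ($\delta(a,b)=0$ if $a=b$, $1$ otherwise) and shift $\sigma$. A subshift is a nonempty closed $\sigma$-invariant subset; a finite word is contained in $\Pi$ if it is a prefix of some point of $\Pi$. Construction of $T$: enumerate all finite words contained in $\Pi$ as $C_1,C_2,\dots$; fix a finite word $A_1$ not contained in $\Pi$; for $y\in\Pi$ let $Y_n$ be its first $n$ symbols; $B_n=C_nY_n\cdots Y_n$ ($Y_n$ repeated $|A_n|^2$ times), $A_{n+1}=A_nB_nA_n$; $T(y)$ is the point having every $A_n$ as prefix; the construction requires $|C_n|=o(|A_n|)$. With $\Phi^{(n)}_{xy}(t)=\frac1n|\{0\le i<n: d(\sigma^ix,\sigma^iy)<t\}|$, a pair $(x,y)$ is DC1 if $\liminf_n\Phi^{(n)}_{xy}(s)=0$ for some $s>0$ and $\limsup_n\Phi^{(n)}_{xy}(t)=1$ for all $t>0$. *)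

theory Defs
  imports "HOL-Analysis.Analysis" "HOL-Library.Extended_Real" "HOL-Library.Liminf_Limsup"
begin

text \<open>Points of the full shift are sequences nat => nat; index i here is the
  paper's coordinate i+1.\<close>

definition FullShift :: "nat \<Rightarrow> (nat \<Rightarrow> nat) set" where
  "FullShift k = {x. \<forall>i. x i < k}"

definition shiftd :: "(nat \<Rightarrow> nat) \<Rightarrow> (nat \<Rightarrow> nat) \<Rightarrow> real" where
  "shiftd x y = (\<Sum>n. (if x n = y n then 0 else 1) / 2 ^ (Suc n))"

definition sigma :: "(nat \<Rightarrow> nat) \<Rightarrow> (nat \<Rightarrow> nat)" where
  "sigma x = (\<lambda>j. x (Suc j))"

definition subshift :: "nat \<Rightarrow> (nat \<Rightarrow> nat) set \<Rightarrow> bool" where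
  "subshift k P \<longleftrightarrow> P \<noteq> {} \<and> P \<subseteq> FullShift k
     \<and> (\<forall>x\<in>FullShift k. (\<forall>e>0. \<exists>y\<in>P. shiftd x y < e) \<longrightarrow> x \<in> P)
     \<and> sigma ` P \<subseteq> P"

definition is_prefix :: "nat list \<Rightarrow> (nat \<Rightarrow> nat) \<Rightarrow> bool" where
  "is_prefix w x \<longleftrightarrow> (\<forall>i<length w. x i = w ! i)"

definition contained :: "(nat \<Rightarrow> nat) set \<Rightarrow> nat list \<Rightarrow> bool" where
  "contained P w \<longleftrightarrow> (\<exists>x\<in>P. is_prefix w x)"

text \<open>Aw A1 C y n is the paper's A_{n+1}; C n is the paper's C_{n+1};
  the paper's Y_{n+1} is take (n+1) of y.\<close>
fun Aw :: "nat list \<Rightarrow> (nat \<Rightarrow> nat list) \<Rightarrow> (nat \<Rightarrow> nat) \<Rightarrow> nat \<Rightarrow> nat list" where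
  "Aw A1 C y 0 = A1"
| "Aw A1 C y (Suc n) =
     (let A = Aw A1 C y n;
          B = C n @ concat (replicate (length A ^ 2) (map y [0..<Suc n]))
      in A @ B @ A)"

definition Tmap :: "nat list \<Rightarrow> (nat \<Rightarrow> nat list) \<Rightarrow> (nat \<Rightarrow> nat) \<Rightarrow> (nat \<Rightarrow> nat)" where
  "Tmap A1 C y = (THE x. \<forall>n. is_prefix (Aw A1 C y n) x)"

definition Phi :: "(nat \<Rightarrow> nat) \<Rightarrow> (nat \<Rightarrow> nat) \<Rightarrow> nat \<Rightarrow> real \<Rightarrow> real" where
  "Phi x y n t = card {i. i < n \<and> shiftd ((sigma ^^ i) x) ((sigma ^^ i) y) < t} / real n"

definition DC1 :: "(nat \<Rightarrow> nat) \<Rightarrow> (nat \<Rightarrow> nat) \<Rightarrow> bool" where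
  "DC1 x y \<longleftrightarrow>
     (\<exists>s>0. liminf (\<lambda>n. ereal (Phi x y n s)) = 0)
   \<and> (\<forall>t>0. limsup (\<lambda>n. ereal (Phi x y n t)) = 1)"

end

theory Submission
  imports Defs
begin

(* In T y the word A_(n+2) = A_(n+1) C_(n+1) Y_(n+1)...Y_(n+1) A_(n+1) puts |A_(n+1)|^2 copies
   of Y_(n+1) = y_1 ... y_(n+1) at a position that does not depend on y, since the lengths |A_n|
   do not. Inside one copy, the orbits of T y, T y' at offset j are as close as those of y, y'
   at time j up to an error 2^-(n+1-j), so up to the end N_n of the run the frequency of close
   times of (T y, T y') is that of (y, y') up to time n+1, with the threshold moved by any
   fixed delta, up to O(1/n): the prefix A_(n+1) C_(n+1) is negligible because |C_n| = o(|A_n|).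
   Passing to liminf and limsup along N_n transfers both DC1 conditions, with s halved. *)

lemma sum_lessThan_add: "(\<Sum>i<m + n. f i) = (\<Sum>i<m. f i) + (\<Sum>i<n. f (m + i))" for n :: nat
  by (induction n) (simp_all add: add_ac)

lemma sum_lessThan_blocks:
  "(\<Sum>i<a + R * p. f i) = (\<Sum>i<a. f i) + (\<Sum>q<R. \<Sum>j<p. f (a + q * p + j))" for R :: nat
proof (induction R)
  case (Suc R)
  have "(\<Sum>i<a + Suc R * p. f i) = (\<Sum>i<a + R * p. f i) + (\<Sum>j<p. f (a + R * p + j))"
    unfolding mult_Suc add.assoc[symmetric] add.commute[of p] by (rule sum_lessThan_add)
  then show ?case
    using Suc by (simp add: add_ac)
qed simp

lemma sum_of_bool_tail_le: "(\<Sum>j<p. of_bool (p < j + m) :: real) \<le> m" for p m :: nat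
proof -
  have "card ({..<p} \<inter> {j. p < j + m}) \<le> card {p - m..<p}"
    by (rule card_mono) auto
  then show ?thesis
    by simp
qed

lemma liminf_le_liminf_reindex:
  fixes f :: "nat \<Rightarrow> 'a::complete_linorder"
  assumes "filterlim r at_top sequentially"
  shows "liminf f \<le> liminf (\<lambda>n. f (r n))"
proof -
  have "liminf f \<le> Liminf (filtermap r sequentially) f"
    using assms unfolding filterlim_def Liminf_def le_filter_def
    by (intro SUP_subset_mono) auto
  also have "\<dots> \<le> liminf (\<lambda>n. f (r n))"
    by (rule Liminf_filtermap_le)
  finally show ?thesis .
qed

lemma limsup_reindex_le_limsup:
  fixes f :: "nat \<Rightarrow> 'a::complete_linorder"
  assumes "filterlim r at_top sequentially"
  shows "limsup (\<lambda>n. f (r n)) \<le> limsup f"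
proof -
  have "limsup (\<lambda>n. f (r n)) \<le> Limsup (filtermap r sequentially) f"
    by (rule Limsup_filtermap_ge)
  also have "\<dots> \<le> limsup f"
    using assms unfolding filterlim_def Limsup_def le_filter_def
    by (intro INF_superset_mono) auto
  finally show ?thesis .
qed

lemma liminf_le_liminf_plus_null:
  assumes "\<forall>\<^sub>F n in sequentially. f n \<le> g n + e n" and "e \<longlonglongrightarrow> 0"
  shows "liminf (\<lambda>n. ereal (f n)) \<le> liminf (\<lambda>n. ereal (g n))"
proof -
  have "liminf (\<lambda>n. ereal (f n)) \<le> liminf (\<lambda>n. ereal (e n) + ereal (g n))"
    using assms(1) by (intro Liminf_mono) (auto elim!: eventually_mono)
  also have "\<dots> = ereal 0 + liminf (\<lambda>n. ereal (g n))"
    using assms(2) by (intro ereal_liminf_lim_add) (auto intro: tendsto_ereal)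
  finally show ?thesis
    by simp
qed

lemma limsup_le_limsup_plus_null:
  assumes "\<forall>\<^sub>F n in sequentially. g n \<le> f n + e n" and "e \<longlonglongrightarrow> 0"
  shows "limsup (\<lambda>n. ereal (g n)) \<le> limsup (\<lambda>n. ereal (f n))"
proof -
  have "limsup (\<lambda>n. ereal (g n)) \<le> limsup (\<lambda>n. ereal (e n) + ereal (f n))"
    using assms(1) by (intro Limsup_mono) (auto elim!: eventually_mono)
  also have "\<dots> = ereal 0 + limsup (\<lambda>n. ereal (f n))"
    using assms(2) by (intro ereal_limsup_lim_add) (auto intro: tendsto_ereal)
  finally show ?thesis
    by simp
qed

lemma liminf_le_liminf_along:
  assumes "filterlim N at_top sequentially"
    and "\<forall>\<^sub>F n in sequentially. f (N n) \<le> g (Suc n) + e n" and "e \<longlonglongrightarrow> 0"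
  shows "liminf (\<lambda>n. ereal (f n)) \<le> liminf (\<lambda>n. ereal (g n))"
proof -
  have "liminf (\<lambda>n. ereal (f n)) \<le> liminf (\<lambda>n. ereal (f (N n)))"
    by (rule liminf_le_liminf_reindex) fact
  also have "\<dots> \<le> liminf (\<lambda>n. ereal (g (Suc n)))"
    by (rule liminf_le_liminf_plus_null) fact+
  also have "\<dots> = liminf (\<lambda>n. ereal (g n))"
    using liminf_shift[of "\<lambda>n. ereal (g n)"] by simp
  finally show ?thesis .
qed

lemma limsup_le_limsup_along:
  assumes "filterlim N at_top sequentially"
    and "\<forall>\<^sub>F n in sequentially. g (Suc n) \<le> f (N n) + e n" and "e \<longlonglongrightarrow> 0"
  shows "limsup (\<lambda>n. ereal (g n)) \<le> limsup (\<lambda>n. ereal (f n))"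
proof -
  have "limsup (\<lambda>n. ereal (g n)) = limsup (\<lambda>n. ereal (g (Suc n)))"
    using limsup_shift[of "\<lambda>n. ereal (g n)"] by simp
  also have "\<dots> \<le> limsup (\<lambda>n. ereal (f (N n)))"
    by (rule limsup_le_limsup_plus_null) fact+
  also have "\<dots> \<le> limsup (\<lambda>n. ereal (f n))"
    by (rule limsup_reindex_le_limsup) fact
  finally show ?thesis .
qed

lemma funpow_sigma: "(sigma ^^ i) x = (\<lambda>l. x (i + l))"
  by (induction i) (auto simp: sigma_def)

lemma shiftd_diff_le:
  assumes "\<forall>l<L. u l = v l \<and> u' l = v' l"
  shows "\<bar>shiftd u u' - shiftd v v'\<bar> \<le> 1 / 2 ^ L"
proof -
  define d where "d w w' n = ((if w n = w' n then 0 else 1) / 2 ^ Suc n :: real)"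
    for w w' :: "nat \<Rightarrow> nat" and n
  define h where "h n = (if n < L then 0 else (1/2::real) ^ Suc n)" for n
  have geom: "summable (\<lambda>n. (1/2::real) ^ Suc n)"
    using summable_geometric[of "1/2::real"] by simp
  have d_summable: "summable (d w w')" for w w'
    by (rule summable_comparison_test'[OF geom]) (simp add: d_def power_one_over)
  have h_summable: "summable h"
    by (rule summable_comparison_test'[OF geom]) (simp add: h_def)
  have d_diff: "\<bar>d u u' n - d v v' n\<bar> \<le> h n" for n
    using assms by (auto simp: d_def h_def power_one_over)
  have "shiftd u u' - shiftd v v' = (\<Sum>n. d u u' n - d v v' n)"
    unfolding shiftd_def d_def[symmetric] using suminf_diff[OF d_summable d_summable] by simp
  also have "\<bar>\<dots>\<bar> \<le> suminf h"
    using norm_suminf_le[OF _ h_summable, of "\<lambda>n. d u u' n - d v v' n"] d_diff by simp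
  also have "suminf h = (\<Sum>n. (1/2::real) ^ Suc L * (1/2) ^ n)"
    using suminf_split_initial_segment[OF h_summable, of L] by (simp add: h_def power_add mult_ac)
  also have "\<dots> = (1/2) ^ Suc L * (\<Sum>n. (1/2::real) ^ n)"
    by (rule suminf_mult[OF summable_geometric]) simp
  also have "\<dots> = 1 / 2 ^ L"
    using suminf_geometric[of "1/2::real"] by (simp add: power_one_over)
  finally show ?thesis .
qed

definition orbit_dist :: "(nat \<Rightarrow> nat) \<Rightarrow> (nat \<Rightarrow> nat) \<Rightarrow> nat \<Rightarrow> real" where
  "orbit_dist x x' i = shiftd ((sigma ^^ i) x) ((sigma ^^ i) x')"

definition close_count :: "(nat \<Rightarrow> nat) \<Rightarrow> (nat \<Rightarrow> nat) \<Rightarrow> nat \<Rightarrow> real \<Rightarrow> real" where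
  "close_count x x' n t = (\<Sum>i<n. of_bool (orbit_dist x x' i < t))"

lemma Phi_eq_close_count: "Phi x x' n t = close_count x x' n t / n"
proof -
  have "{..<n} \<inter> {i. orbit_dist x x' i < t} = {i. i < n \<and> orbit_dist x x' i < t}"
    by auto
  then show ?thesis
    by (simp add: Phi_def close_count_def orbit_dist_def)
qed

lemma close_count_nonneg: "0 \<le> close_count x x' n t"
  by (simp add: close_count_def sum_nonneg)

lemma close_count_le: "close_count x x' n t \<le> n"
  using sum_bounded_above[of "{..<n}" "\<lambda>i. of_bool (orbit_dist x x' i < t) :: real" 1]
  by (simp add: close_count_def)

lemma close_count_mono: "s \<le> t \<Longrightarrow> close_count x x' n s \<le> close_count x x' n t"
  unfolding close_count_def by (intro sum_mono) auto

lemma Phi_nonneg: "0 \<le> Phi x x' n t"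
  by (simp add: Phi_eq_close_count close_count_nonneg)

lemma Phi_le_one: "Phi x x' n t \<le> 1"
  using close_count_le[of x x' n t] by (auto simp: Phi_eq_close_count divide_le_eq_1)

lemma Phi_mono: "s \<le> t \<Longrightarrow> Phi x x' n s \<le> Phi x x' n t"
  by (simp add: Phi_eq_close_count close_count_mono divide_right_mono)

lemma orbit_dist_window:
  assumes "\<forall>l<p. x (b + l) = y l \<and> x' (b + l) = y' l" and "j + m \<le> p"
  shows "\<bar>orbit_dist x x' (b + j) - orbit_dist y y' j\<bar> \<le> 1 / 2 ^ m"
  unfolding orbit_dist_def funpow_sigma
  by (rule shiftd_diff_le) (use assms in \<open>auto simp: add.assoc\<close>)

lemma window_count_le:
  assumes window: "\<forall>l<p. x (b + l) = y l \<and> x' (b + l) = y' l"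
  shows "(\<Sum>j<p. of_bool (orbit_dist x x' (b + j) < t)) \<le> close_count y y' p (t + 1 / 2 ^ m) + m"
proof -
  \<comment> \<open>Only the last \<open>m\<close> offsets of the window look at coordinates beyond it.\<close>
  have "of_bool (orbit_dist x x' (b + j) < t)
      \<le> (of_bool (orbit_dist y y' j < t + 1 / 2 ^ m) + of_bool (p < j + m) :: real)" for j
    using orbit_dist_window[OF window, of j m] by (cases "p < j + m") auto
  then have "(\<Sum>j<p. of_bool (orbit_dist x x' (b + j) < t))
      \<le> (\<Sum>j<p. of_bool (orbit_dist y y' j < t + 1 / 2 ^ m) + of_bool (p < j + m) :: real)"
    by (intro sum_mono)
  also have "\<dots> \<le> close_count y y' p (t + 1 / 2 ^ m) + m"
    using sum_of_bool_tail_le[of p m] by (simp add: sum.distrib close_count_def)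
  finally show ?thesis .
qed

lemma window_count_ge:
  assumes window: "\<forall>l<p. x (b + l) = y l \<and> x' (b + l) = y' l"
  shows "close_count y y' p (t - 1 / 2 ^ m) \<le> (\<Sum>j<p. of_bool (orbit_dist x x' (b + j) < t)) + m"
proof -
  have "of_bool (orbit_dist y y' j < t - 1 / 2 ^ m)
      \<le> (of_bool (orbit_dist x x' (b + j) < t) + of_bool (p < j + m) :: real)" for j
    using orbit_dist_window[OF window, of j m] by (cases "p < j + m") auto
  then have "close_count y y' p (t - 1 / 2 ^ m)
      \<le> (\<Sum>j<p. of_bool (orbit_dist x x' (b + j) < t) + of_bool (p < j + m) :: real)"
    unfolding close_count_def by (intro sum_mono)
  also have "\<dots> \<le> (\<Sum>j<p. of_bool (orbit_dist x x' (b + j) < t)) + m"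
    using sum_of_bool_tail_le[of p m] by (simp add: sum.distrib)
  finally show ?thesis .
qed

lemma close_count_periodic_block:
  assumes block: "\<forall>i<R * p. x (a + i) = y (i mod p) \<and> x' (a + i) = y' (i mod p)"
  shows "close_count x x' (a + R * p) t \<le> a + R * (close_count y y' p (t + 1 / 2 ^ m) + m)"
    and "R * (close_count y y' p (t - 1 / 2 ^ m) - m) \<le> close_count x x' (a + R * p) t"
proof -
  define window_count where
    "window_count q = (\<Sum>j<p. of_bool (orbit_dist x x' (a + q * p + j) < t) :: real)" for q
  have window: "\<forall>l<p. x (a + q * p + l) = y l \<and> x' (a + q * p + l) = y' l" if "q < R" for q
  proof (intro allI impI)
    fix l assume "l < p"
    then have "q * p + l < Suc q * p"
      by simp
    also have "\<dots> \<le> R * p"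
      using \<open>q < R\<close> by (intro mult_le_mono1) simp
    finally show "x (a + q * p + l) = y l \<and> x' (a + q * p + l) = y' l"
      using block \<open>l < p\<close> by (auto simp: add.assoc)
  qed
  have split: "close_count x x' (a + R * p) t = close_count x x' a t + (\<Sum>q<R. window_count q)"
    unfolding close_count_def window_count_def by (rule sum_lessThan_blocks)
  have "(\<Sum>q<R. window_count q) \<le> (\<Sum>q<R. close_count y y' p (t + 1 / 2 ^ m) + m)"
    using window_count_le[OF window] by (intro sum_mono) (simp add: window_count_def)
  then show "close_count x x' (a + R * p) t \<le> a + R * (close_count y y' p (t + 1 / 2 ^ m) + m)"
    using split close_count_le[of x x' a t] by simp
  have "(\<Sum>q<R. close_count y y' p (t - 1 / 2 ^ m) - m) \<le> (\<Sum>q<R. window_count q)"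
    using window_count_ge[OF window] by (intro sum_mono) (simp add: window_count_def algebra_simps)
  then show "R * (close_count y y' p (t - 1 / 2 ^ m) - m) \<le> close_count x x' (a + R * p) t"
    using split close_count_nonneg[of x x' a t] by simp
qed

lemma Phi_periodic_block_le:
  assumes block: "\<forall>i<R * p. x (a + i) = y (i mod p) \<and> x' (a + i) = y' (i mod p)"
    and "0 < R" "0 < p"
  shows "Phi x x' (a + R * p) t \<le> Phi y y' p (t + 1 / 2 ^ m) + (m + a / R) / p"
proof -
  define Y where "Y = close_count y y' p (t + 1 / 2 ^ m) + m"
  have "close_count x x' (a + R * p) t / (a + R * p) \<le> (a + R * Y) / (a + R * p)"
    using close_count_periodic_block(1)[OF block] by (intro divide_right_mono) (simp_all add: Y_def)
  also have "\<dots> = a / (a + R * p) + R * Y / (a + R * p)"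
    by (simp add: add_divide_distrib)
  also have "\<dots> \<le> a / (R * p) + R * Y / (R * p)"
    using assms close_count_nonneg by (intro add_mono frac_le) (simp_all add: Y_def)
  also have "\<dots> = Phi y y' p (t + 1 / 2 ^ m) + (m + a / R) / p"
    using assms by (simp add: Y_def Phi_eq_close_count field_simps)
  finally show ?thesis
    by (simp add: Phi_eq_close_count)
qed

lemma Phi_periodic_block_ge:
  assumes block: "\<forall>i<R * p. x (a + i) = y (i mod p) \<and> x' (a + i) = y' (i mod p)"
    and "0 < R" "0 < p"
  shows "Phi y y' p (t - 1 / 2 ^ m) - (m + a / R) / p \<le> Phi x x' (a + R * p) t"
proof -
  define Y where "Y = close_count y y' p (t - 1 / 2 ^ m) - m"
  have "Y \<le> p"
    using close_count_le[of y y' p "t - 1 / 2 ^ m"] by (simp add: Y_def)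
  then have "R * Y \<le> R * p"
    by (simp add: mult_left_mono)
  then have "a * (R * Y - a - R * p) \<le> 0"
    by (intro mult_nonneg_nonpos) auto
  moreover have "(0::real) < a + R * p"
    using assms by (simp add: add_nonneg_pos)
  ultimately have "(Y - a / R) / p \<le> R * Y / (a + R * p)"
    using assms by (simp add: field_simps)
  also have "\<dots> \<le> close_count x x' (a + R * p) t / (a + R * p)"
    using close_count_periodic_block(2)[OF block] by (intro divide_right_mono) (simp_all add: Y_def)
  finally show ?thesis
    by (simp add: Y_def Phi_eq_close_count diff_divide_distrib add_divide_distrib)
qed

lemma DC1_of_shadowing:
  assumes "DC1 y y'" and N: "filterlim N at_top sequentially"
    and shadow: "\<And>\<delta> t. \<delta> > 0 \<Longrightarrow> \<exists>e. e \<longlonglongrightarrow> 0 \<and> (\<forall>\<^sub>F n in sequentially.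
        Phi x x' (N n) t \<le> Phi y y' (Suc n) (t + \<delta>) + e n \<and>
        Phi y y' (Suc n) (t - \<delta>) \<le> Phi x x' (N n) t + e n)"
  shows "DC1 x x'"
proof -
  from assms(1) obtain s where "s > 0" and liminf_y: "liminf (\<lambda>n. ereal (Phi y y' n s)) = 0"
    and limsup_y: "\<And>t. t > 0 \<Longrightarrow> limsup (\<lambda>n. ereal (Phi y y' n t)) = 1"
    unfolding DC1_def by blast
  have "liminf (\<lambda>n. ereal (Phi x x' n (s / 2))) = 0"
  proof (rule antisym)
    obtain e where "\<forall>\<^sub>F n in sequentially. Phi x x' (N n) (s / 2) \<le> Phi y y' (Suc n) s + e n"
      and "e \<longlonglongrightarrow> 0"
      using shadow[of "s / 2" "s / 2"] \<open>s > 0\<close> by (auto simp: eventually_conj_iff)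
    with N have "liminf (\<lambda>n. ereal (Phi x x' n (s / 2))) \<le> liminf (\<lambda>n. ereal (Phi y y' n s))"
      by (rule liminf_le_liminf_along)
    then show "liminf (\<lambda>n. ereal (Phi x x' n (s / 2))) \<le> 0"
      using liminf_y by simp
    show "0 \<le> liminf (\<lambda>n. ereal (Phi x x' n (s / 2)))"
      by (intro Liminf_bounded) (simp add: Phi_nonneg)
  qed
  moreover have "limsup (\<lambda>n. ereal (Phi x x' n t)) = 1" if "t > 0" for t
  proof (rule antisym)
    show "limsup (\<lambda>n. ereal (Phi x x' n t)) \<le> 1"
      by (intro Limsup_bounded) (simp add: Phi_le_one)
    obtain e where "\<forall>\<^sub>F n in sequentially. Phi y y' (Suc n) (t / 2) \<le> Phi x x' (N n) t + e n"
      and "e \<longlonglongrightarrow> 0"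
      using shadow[of "t / 2" t] \<open>t > 0\<close> by (auto simp: eventually_conj_iff)
    with N have "limsup (\<lambda>n. ereal (Phi y y' n (t / 2))) \<le> limsup (\<lambda>n. ereal (Phi x x' n t))"
      by (rule limsup_le_limsup_along)
    then show "1 \<le> limsup (\<lambda>n. ereal (Phi x x' n t))"
      using limsup_y[of "t / 2"] \<open>t > 0\<close> by simp
  qed
  ultimately show ?thesis
    using \<open>s > 0\<close> unfolding DC1_def by (meson half_gt_zero)
qed

lemma length_concat_replicate: "length (concat (replicate r xs)) = r * length xs"
  by (induction r) auto

lemma nth_concat_replicate_upt:
  "i < r * p \<Longrightarrow> concat (replicate r (map y [0..<p])) ! i = y (i mod p)"
proof (induction r arbitrary: i)
  case (Suc r)
  then show ?case
    by (cases "i < p") (simp_all add: nth_append le_mod_geq)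
qed simp

lemma length_Aw_independent: "length (Aw A1 C y n) = length (Aw A1 C z n)"
  by (induction n) (simp_all add: Let_def length_concat_replicate del: upt_Suc)

lemma length_Aw_Suc:
  "length (Aw A1 C y (Suc n)) = 2 * length (Aw A1 C y n) + length (C n) + length (Aw A1 C y n) ^ 2 * Suc n"
  by (simp add: Let_def length_concat_replicate del: upt_Suc)

lemma length_Aw_gt: "A1 \<noteq> [] \<Longrightarrow> n < length (Aw A1 C y n)"
  by (induction n) (simp_all add: length_Aw_Suc del: Aw.simps(2))

lemma Aw_extends: "n \<le> m \<Longrightarrow> \<exists>w. Aw A1 C y m = Aw A1 C y n @ w"
proof (induction m rule: dec_induct)
  case (step m)
  then show ?case
    by (auto simp: Let_def)
qed simp

lemma is_prefix_Aw_Tmap: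
  assumes "A1 \<noteq> []"
  shows "is_prefix (Aw A1 C y n) (Tmap A1 C y)"
proof -
  define x where "x i = Aw A1 C y i ! i" for i
  have nth_Aw: "Aw A1 C y n ! i = x i" if "i < length (Aw A1 C y n)" for n i
  proof (cases "n \<le> i")
    case True
    then obtain w where "Aw A1 C y i = Aw A1 C y n @ w"
      using Aw_extends by blast
    then show ?thesis
      using that by (simp add: x_def nth_append)
  next
    case False
    then obtain w where "Aw A1 C y n = Aw A1 C y i @ w"
      using Aw_extends[of i n A1 C y] False by auto
    then show ?thesis
      using length_Aw_gt[OF assms, of i C y] by (simp add: x_def nth_append)
  qed
  have "Tmap A1 C y = x"
    unfolding Tmap_def
  proof (rule the_equality)
    show "\<forall>n. is_prefix (Aw A1 C y n) x"
      by (simp add: is_prefix_def nth_Aw)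
    show "z = x" if "\<forall>n. is_prefix (Aw A1 C y n) z" for z
    proof
      fix i
      show "z i = x i"
        using that length_Aw_gt[OF assms, of i C y] by (simp add: is_prefix_def nth_Aw)
    qed
  qed
  then show ?thesis
    by (simp add: is_prefix_def nth_Aw)
qed

lemma Tmap_periodic_block:
  assumes "A1 \<noteq> []" and "i < length (Aw A1 C y n) ^ 2 * Suc n"
  shows "Tmap A1 C y (length (Aw A1 C y n) + length (C n) + i) = y (i mod Suc n)"
proof -
  have "length (Aw A1 C y n) + length (C n) + i < length (Aw A1 C y (Suc n))"
    using assms(2) by (simp add: length_Aw_Suc del: Aw.simps(2))
  moreover have "is_prefix (Aw A1 C y (Suc n)) (Tmap A1 C y)"
    by (rule is_prefix_Aw_Tmap[OF assms(1)])
  ultimately have "Tmap A1 C y (length (Aw A1 C y n) + length (C n) + i)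
      = Aw A1 C y (Suc n) ! (length (Aw A1 C y n) + length (C n) + i)"
    unfolding is_prefix_def by blast
  also have "\<dots> = y (i mod Suc n)"
    using assms(2)
    by (simp add: Let_def nth_append length_concat_replicate nth_concat_replicate_upt del: upt_Suc)
  finally show ?thesis .
qed

text \<open>The position in \<open>Tmap A1 C y\<close> where the run of copies of the paper's \<open>Y\<^sub>n\<^sub>+\<^sub>1\<close>
  inside \<open>A\<^sub>n\<^sub>+\<^sub>2\<close> ends.\<close>

definition block_end :: "nat list \<Rightarrow> (nat \<Rightarrow> nat list) \<Rightarrow> (nat \<Rightarrow> nat) \<Rightarrow> nat \<Rightarrow> nat" where
  "block_end A1 C y n = length (Aw A1 C y n) + length (C n) + length (Aw A1 C y n) ^ 2 * Suc n"

lemma Phi_Tmap_block_end: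
  assumes "A1 \<noteq> []" and "length (C n) \<le> length (Aw A1 C y n)"
  shows "Phi (Tmap A1 C y) (Tmap A1 C y') (block_end A1 C y n) t
      \<le> Phi y y' (Suc n) (t + 1 / 2 ^ m) + (real m + 2) / Suc n"
    and "Phi y y' (Suc n) (t - 1 / 2 ^ m)
      \<le> Phi (Tmap A1 C y) (Tmap A1 C y') (block_end A1 C y n) t + (real m + 2) / Suc n"
proof -
  define a where "a = length (Aw A1 C y n)"
  define b where "b = a + length (C n)"
  have "length (Aw A1 C y' n) = a"
    unfolding a_def by (rule length_Aw_independent)
  then have block: "\<forall>i<a\<^sup>2 * Suc n. Tmap A1 C y (b + i) = y (i mod Suc n)
      \<and> Tmap A1 C y' (b + i) = y' (i mod Suc n)"
    using Tmap_periodic_block[OF assms(1), of _ C y n] Tmap_periodic_block[OF assms(1), of _ C y' n]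
    by (simp add: a_def b_def)
  have "0 < a"
    using length_Aw_gt[OF assms(1), of n C y] unfolding a_def by linarith
  have "b \<le> 2 * a"
    using assms(2) by (simp add: a_def b_def)
  also have "2 * a \<le> 2 * a\<^sup>2"
    by (simp add: power2_eq_square)
  finally have "real b / real (a\<^sup>2) \<le> 2"
    using \<open>0 < a\<close> by (simp add: divide_le_eq del: of_nat_power)
  then have err: "(m + b / a\<^sup>2) / Suc n \<le> (real m + 2) / Suc n"
    by (simp add: divide_right_mono)
  have end_eq: "block_end A1 C y n = b + a\<^sup>2 * Suc n"
    by (simp add: block_end_def a_def b_def)
  show "Phi (Tmap A1 C y) (Tmap A1 C y') (block_end A1 C y n) t
      \<le> Phi y y' (Suc n) (t + 1 / 2 ^ m) + (real m + 2) / Suc n"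
    using Phi_periodic_block_le[OF block, of t m] \<open>0 < a\<close> err by (simp add: end_eq)
  show "Phi y y' (Suc n) (t - 1 / 2 ^ m)
      \<le> Phi (Tmap A1 C y) (Tmap A1 C y') (block_end A1 C y n) t + (real m + 2) / Suc n"
    using Phi_periodic_block_ge[OF block, of t m] \<open>0 < a\<close> err by (simp add: end_eq)
qed

lemma Tmap_shadows:
  assumes "A1 \<noteq> []" and short: "\<forall>\<^sub>F n in sequentially. length (C n) \<le> length (Aw A1 C y n)"
    and "\<delta> > 0"
  shows "\<exists>e. e \<longlonglongrightarrow> 0 \<and> (\<forall>\<^sub>F n in sequentially.
      Phi (Tmap A1 C y) (Tmap A1 C y') (block_end A1 C y n) t \<le> Phi y y' (Suc n) (t + \<delta>) + e n \<and>
      Phi y y' (Suc n) (t - \<delta>) \<le> Phi (Tmap A1 C y) (Tmap A1 C y') (block_end A1 C y n) t + e n)"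
proof -
  obtain m :: nat where "1 / 2 ^ m < \<delta>"
    using real_arch_pow_inv[of \<delta> "1 / 2"] \<open>\<delta> > 0\<close> by (auto simp: power_one_over)
  then have Phi_le: "Phi y y' k (t + 1 / 2 ^ m) \<le> Phi y y' k (t + \<delta>)"
    and Phi_ge: "Phi y y' k (t - \<delta>) \<le> Phi y y' k (t - 1 / 2 ^ m)" for k
    by (simp_all add: Phi_mono)
  have "(\<lambda>n. (real m + 2) / real (Suc n)) \<longlonglongrightarrow> 0"
    by (rule LIMSEQ_Suc[OF lim_const_over_n])
  moreover have "\<forall>\<^sub>F n in sequentially.
      Phi (Tmap A1 C y) (Tmap A1 C y') (block_end A1 C y n) t
        \<le> Phi y y' (Suc n) (t + \<delta>) + (real m + 2) / Suc n \<and>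
      Phi y y' (Suc n) (t - \<delta>)
        \<le> Phi (Tmap A1 C y) (Tmap A1 C y') (block_end A1 C y n) t + (real m + 2) / Suc n"
    using short
  proof eventually_elim
    case (elim n)
    show ?case
      using Phi_Tmap_block_end[OF \<open>A1 \<noteq> []\<close> elim, of y' t m] Phi_le[of "Suc n"] Phi_ge[of "Suc n"]
      by linarith
  qed
  ultimately show ?thesis
    by blast
qed

theorem proposition3p7:
  fixes k :: nat and P :: "(nat \<Rightarrow> nat) set" and C :: "nat \<Rightarrow> nat list"
    and A1 :: "nat list" and y y' :: "nat \<Rightarrow> nat"
  assumes "k \<ge> 2"
    and "subshift k P"
    and "P \<noteq> FullShift k"
    and "range C = {w. contained P w}"
    and "set A1 \<subseteq> {..<k}"
    and "\<not> contained P A1"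
    and "\<forall>z\<in>P. (\<lambda>n. real (length (C n))) \<in> o(\<lambda>n. real (length (Aw A1 C z n)))"
    and "y \<in> P" and "y' \<in> P"
    and "DC1 y y'"
  shows "DC1 (Tmap A1 C y) (Tmap A1 C y')"
proof -
  have "contained P []"
    using \<open>subshift k P\<close> by (auto simp: subshift_def contained_def is_prefix_def)
  then have "A1 \<noteq> []"
    using \<open>\<not> contained P A1\<close> by auto
  have "\<forall>\<^sub>F n in sequentially. norm (real (length (C n))) \<le> 1 * norm (real (length (Aw A1 C y n)))"
    using assms(7) \<open>y \<in> P\<close> by (intro landau_o.smallD) auto
  then have short: "\<forall>\<^sub>F n in sequentially. length (C n) \<le> length (Aw A1 C y n)"
    by simp
  have N: "filterlim (block_end A1 C y) at_top sequentially"
  proof (rule filterlim_at_top_mono[OF filterlim_ident])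
    show "\<forall>\<^sub>F n in sequentially. n \<le> block_end A1 C y n"
      using length_Aw_gt[OF \<open>A1 \<noteq> []\<close>] by (simp add: block_end_def less_imp_le_nat trans_le_add1)
  qed
  show ?thesis
    by (rule DC1_of_shadowing[OF \<open>DC1 y y'\<close> N Tmap_shadows[OF \<open>A1 \<noteq> []\<close> short]])
qed

end
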